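(* Let $p\in(0,\frac12)$ and $q=4p(1-p)$. Then $\eta_{KL}(Z(q))=\eta_{KL}(\mathrm{BSC}(p))=(1-2p)^2$, but $Z(q)\not\succeq_{\mathrm{l.n.}}\mathrm{BSC}(p)$.
   Context: For $q\in[0,1]$, the Z-channel $Z(q)$ has input and output alphabet $\{0,1\}$ with $Z(0|0)=1$, $Z(1|0)=0$, $Z(0|1)=q$, $Z(1|1)=1-q$. $\mathrm{BSC}(p)$ is the binary symmetric channel with crossover probability $p$. The KL contraction coefficient is $\eta_{KL}(P)=\sup_{P_X,Q_X}\frac{D(P\circ P_X\|P\circ Q_X)}{D(P_X\|Q_X)}$ (over inputs with $0<D(P_X\|Q_X)<\infty$, $P\circ P_X$ the output distribution). $P\succeq_{\mathrm{l.n.}}Q$ (less noisy) means $I(U:Y)\ge I(U:Y')$ for every finite-alphabet $U$ and every joint $P_{UX}$, with $U-X-Y$ and $U-X-Y'$ Markov chains. *)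

theory Defs
  imports Complex_Main
begin

(* Binary alphabet {0,1} is rendered as bool: False = 0, True = 1.
   A channel K is a transition kernel: K x y = P(Y = y | X = x). *)

type_synonym bchannel = "bool \<Rightarrow> bool \<Rightarrow> real"

definition Zch :: "real \<Rightarrow> bchannel" where
  "Zch q x y = (if \<not> x then (if \<not> y then 1 else 0) else (if \<not> y then q else 1 - q))"

definition BSC :: "real \<Rightarrow> bchannel" where
  "BSC p x y = (if x = y then 1 - p else p)"

definition is_dist :: "(bool \<Rightarrow> real) \<Rightarrow> bool" where
  "is_dist P \<longleftrightarrow> (\<forall>x. P x \<ge> 0) \<and> (\<Sum>x\<in>UNIV. P x) = 1"

definition outd :: "bchannel \<Rightarrow> (bool \<Rightarrow> real) \<Rightarrow> (bool \<Rightarrow> real)" where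
  "outd K P y = (\<Sum>x\<in>UNIV. P x * K x y)"

(* KL divergence (natural log), with convention 0 log(0/q) = 0; it is finite iff supp P \<subseteq> supp Q *)
definition kl_finite :: "(bool \<Rightarrow> real) \<Rightarrow> (bool \<Rightarrow> real) \<Rightarrow> bool" where
  "kl_finite P Q \<longleftrightarrow> (\<forall>x. P x > 0 \<longrightarrow> Q x > 0)"

definition kl :: "(bool \<Rightarrow> real) \<Rightarrow> (bool \<Rightarrow> real) \<Rightarrow> real" where
  "kl P Q = (\<Sum>x\<in>UNIV. if P x = 0 then 0 else P x * ln (P x / Q x))"

definition eta_KL :: "bchannel \<Rightarrow> real" where
  "eta_KL K = Sup {kl (outd K P) (outd K Q) / kl P Q | P Q.
      is_dist P \<and> is_dist Q \<and> kl_finite P Q \<and> kl P Q > 0}"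

definition mutual_info :: "'a set \<Rightarrow> 'b set \<Rightarrow> ('a \<Rightarrow> 'b \<Rightarrow> real) \<Rightarrow> real" where
  "mutual_info A B J = (\<Sum>a\<in>A. \<Sum>b\<in>B.
      if J a b = 0 then 0
      else J a b * ln (J a b / ((\<Sum>b'\<in>B. J a b') * (\<Sum>a'\<in>A. J a' b))))"

definition is_joint_UX :: "nat \<Rightarrow> (nat \<Rightarrow> bool \<Rightarrow> real) \<Rightarrow> bool" where
  "is_joint_UX n J \<longleftrightarrow> (\<forall>u x. J u x \<ge> 0) \<and> (\<Sum>u<n. \<Sum>x\<in>UNIV. J u x) = 1"

(* joint P_{UY} under U - X - Y Markov chain with Y = K(X) *)
definition joint_UY :: "bchannel \<Rightarrow> (nat \<Rightarrow> bool \<Rightarrow> real) \<Rightarrow> nat \<Rightarrow> bool \<Rightarrow> real" where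
  "joint_UY K J u y = (\<Sum>x\<in>UNIV. J u x * K x y)"

definition less_noisy :: "bchannel \<Rightarrow> bchannel \<Rightarrow> bool" where
  "less_noisy P Q \<longleftrightarrow> (\<forall>n J. is_joint_UX n J \<longrightarrow>
      mutual_info {..<n} UNIV (joint_UY P J) \<ge> mutual_info {..<n} UNIV (joint_UY Q J))"

end

theory Submission
  imports Defs
begin

text \<open>
  Every distribution on {0,1} is a Bernoulli law \<open>bern a\<close>. The Z-channel maps
  \<open>bern a\<close> to \<open>bern ((1 - q) * a)\<close>, a mixture of the input with the point mass
  at 0, so the log-sum inequality gives a contraction by \<open>1 - q\<close>; the inputs
  \<open>(\<delta>\<^sub>1, bern t)\<close> with \<open>t \<rightarrow> 0\<close> show that \<open>1 - q\<close> is the supremum. The BSC maps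
  \<open>bern a\<close> to \<open>bern X(a)\<close> with \<open>X(a) = p + (1 - 2p)a\<close>. In \<open>a\<close>, the derivative of
  \<open>(1 - 2p)\<^sup>2 D(bern a \<parallel> bern b) - D(bern X(a) \<parallel> bern X(b))\<close> is \<open>(1 - 2p)(k(a) - k(b))\<close> with
  \<open>k(a) = (1 - 2p) logit a - logit X(a)\<close>, and \<open>k\<close> increases because
  \<open>a(1 - a) \<le> X(a)(1 - X(a))\<close>; so
  the difference is minimal, namely 0, at \<open>a = b\<close>. Perturbations of the uniform law attain
  \<open>(1 - 2p)\<^sup>2\<close> in the limit (L'Hopital, twice).
  For \<open>q = 4p(1 - p)\<close> both coefficients are \<open>(1 - 2p)\<^sup>2\<close>.

  For the less-noisy part, let \<open>U\<close> be 1 with probability \<open>e\<close> and \<open>X = 1 - U\<close>. At \<open>e = 0\<close> the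
  derivative of \<open>I(U;Y)\<close> is the divergence between the two rows of the channel. For \<open>Z(q)\<close> this
  is \<open>-ln q\<close>, for \<open>BSC(p)\<close> it is \<open>(1 - 2p) ln((1 - p)/p)\<close>, and the latter exceeds the former by
  \<open>2 D(bern p \<parallel> bern 1/2) > 0\<close>; so for small \<open>e\<close> the BSC output carries more information.
\<close>

section \<open>Distributions on two points\<close>

lemma sum_UNIV_bool: "(\<Sum>x\<in>UNIV. f x) = f False + f True"
  by (simp add: UNIV_bool)

definition bern :: "real \<Rightarrow> bool \<Rightarrow> real" where
  "bern a x = (if x then a else 1 - a)"

lemma is_dist_bern: "is_dist (bern a) \<longleftrightarrow> 0 \<le> a \<and> a \<le> 1"
  unfolding is_dist_def bern_def sum_UNIV_bool by auto

lemma is_dist_eq_bern: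
  assumes "is_dist P"
  shows "P = bern (P True)"
proof
  fix x
  have "P False + P True = 1"
    using assms unfolding is_dist_def sum_UNIV_bool by simp
  then show "P x = bern (P True) x"
    unfolding bern_def by (cases x) auto
qed

lemma kl_finite_bern: "kl_finite (bern a) (bern b) \<longleftrightarrow> (0 < a \<longrightarrow> 0 < b) \<and> (a < 1 \<longrightarrow> b < 1)"
  unfolding kl_finite_def bern_def by (auto split: if_splits)

text \<open>No side conditions are needed: \<^term>\<open>ln 0 = 0\<close> and division by zero yield the
  conventions built into \<^const>\<open>kl\<close>.\<close>

lemma kl_bern: "kl (bern a) (bern b) = a * ln (a / b) + (1 - a) * ln ((1 - a) / (1 - b))"
  unfolding kl_def bern_def sum_UNIV_bool by simp

lemma outd_Zch_bern: "outd (Zch q) (bern a) = bern ((1 - q) * a)"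
  unfolding outd_def sum_UNIV_bool Zch_def bern_def by (auto simp: algebra_simps)

lemma outd_BSC_bern: "outd (BSC p) (bern a) = bern (p + (1 - 2 * p) * a)"
  unfolding outd_def sum_UNIV_bool BSC_def bern_def by (auto simp: algebra_simps)

lemma kl_bern_pos:
  assumes "0 < a" "a < 1" "0 < b" "b < 1" "a \<noteq> b"
  shows "0 < kl (bern a) (bern b)"
proof -
  have ln_gt: "1 - y / x < ln (x / y)" if "0 < x" "0 < y" "x \<noteq> y" for x y :: real
  proof -
    have "ln (y / x) < y / x - 1"
      using ln_le_minus_one[of "y / x"] ln_eq_minus_one[of "y / x"] that by force
    then show ?thesis
      using that by (simp add: ln_div)
  qed
  have "a * (1 - b / a) < a * ln (a / b)"
    using ln_gt[of a b] assms by simp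
  moreover have "(1 - a) * (1 - (1 - b) / (1 - a)) < (1 - a) * ln ((1 - a) / (1 - b))"
    using ln_gt[of "1 - a" "1 - b"] assms by simp
  moreover have "a * (1 - b / a) + (1 - a) * (1 - (1 - b) / (1 - a)) = 0"
    using assms by (simp add: field_simps)
  ultimately show ?thesis
    unfolding kl_bern by linarith
qed

lemma eta_KL_eqI:
  fixes K :: bchannel and F :: "'a filter" and P Q :: "'a \<Rightarrow> bool \<Rightarrow> real"
  assumes upper: "\<And>P Q. is_dist P \<Longrightarrow> is_dist Q \<Longrightarrow> kl_finite P Q \<Longrightarrow> 0 < kl P Q \<Longrightarrow>
      kl (outd K P) (outd K Q) \<le> c * kl P Q"
    and F: "F \<noteq> bot"
    and admissible: "\<forall>\<^sub>F t in F. is_dist (P t) \<and> is_dist (Q t) \<and> kl_finite (P t) (Q t)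
      \<and> 0 < kl (P t) (Q t)"
    and lim: "((\<lambda>t. kl (outd K (P t)) (outd K (Q t)) / kl (P t) (Q t)) \<longlongrightarrow> c) F"
  shows "eta_KL K = c"
proof -
  let ?R = "{kl (outd K P) (outd K Q) / kl P Q | P Q.
      is_dist P \<and> is_dist Q \<and> kl_finite P Q \<and> kl P Q > 0}"
  have in_R: "\<forall>\<^sub>F t in F. kl (outd K (P t)) (outd K (Q t)) / kl (P t) (Q t) \<in> ?R"
    using admissible by (rule eventually_mono) blast
  show ?thesis
    unfolding eta_KL_def
  proof (rule cSup_eq_non_empty)
    show "?R \<noteq> {}"
      using eventually_happens'[OF F in_R] by blast
    show "x \<le> c" if "x \<in> ?R" for x
      using that upper by (auto simp: divide_le_eq)
    show "c \<le> y" if "\<And>x. x \<in> ?R \<Longrightarrow> x \<le> y" for y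
      using in_R that by (intro tendsto_upperbound[OF lim _ F]) (simp add: eventually_mono)
  qed
qed

section \<open>The Z-channel\<close>

lemma log_sum_shift_le:
  fixes a b s :: real
  assumes "0 \<le> a" "0 \<le> b" "0 < a \<longrightarrow> 0 < b" "0 < s"
  shows "(a + s) * ln ((a + s) / (b + s)) \<le> a * ln (a / b)"
proof (cases "a = 0")
  case True
  then show ?thesis
    using assms by (simp add: mult_nonneg_nonpos)
next
  case False
  then have a: "0 < a" "0 < b"
    using assms by auto
  have e1: "ln ((a + s) * b / ((b + s) * a)) \<le> (a + s) * b / ((b + s) * a) - 1"
    using a assms by (intro ln_le_minus_one) auto
  have e2: "ln ((a + s) / (b + s)) \<le> (a + s) / (b + s) - 1"
    using a assms by (intro ln_le_minus_one) auto
  have "ln ((a + s) / (b + s)) = ln ((a + s) * b / ((b + s) * a)) + ln (a / b)"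
    using a assms by (simp add: ln_div ln_mult)
  then have "(a + s) * ln ((a + s) / (b + s)) - a * ln (a / b)
      = a * ln ((a + s) * b / ((b + s) * a)) + s * ln ((a + s) / (b + s))"
    by (simp add: algebra_simps)
  also have "\<dots> \<le> a * ((a + s) * b / ((b + s) * a) - 1) + s * ((a + s) / (b + s) - 1)"
    using e1 e2 a assms by (intro add_mono mult_left_mono) auto
  also have "\<dots> = 0"
  proof -
    have bs: "b + s \<noteq> 0"
      using a assms by simp
    have "(a + s) * b / (b + s) + s * ((a + s) / (b + s)) = ((a + s) * b + s * (a + s)) / (b + s)"
      by (metis add_divide_distrib times_divide_eq_right)
    also have "(a + s) * b + s * (a + s) = (a + s) * (b + s)"
      by (simp add: algebra_simps)
    finally have "(a + s) * b / (b + s) + s * ((a + s) / (b + s)) = a + s"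
      using bs by simp
    moreover have "a * ((a + s) * b / ((b + s) * a)) = (a + s) * b / (b + s)"
      using a by simp
    ultimately show ?thesis
      by (simp only: right_diff_distrib mult_1_right)
  qed
  finally show ?thesis
    by simp
qed

lemma kl_outd_Zch_le:
  assumes q: "0 < q" "q < 1" and "is_dist P" "is_dist Q" "kl_finite P Q"
  shows "kl (outd (Zch q) P) (outd (Zch q) Q) \<le> (1 - q) * kl P Q"
proof -
  obtain a b where P: "P = bern a" and Q: "Q = bern b"
    using is_dist_eq_bern assms by blast
  have a: "0 \<le> a" "a \<le> 1" and b: "0 \<le> b" "b \<le> 1" and fin: "a < 1 \<longrightarrow> b < 1"
    using assms unfolding P Q is_dist_bern kl_finite_bern by auto
  have "(1 - (1 - q) * a) * ln ((1 - (1 - q) * a) / (1 - (1 - q) * b))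
      \<le> (1 - q) * (1 - a) * ln ((1 - q) * (1 - a) / ((1 - q) * (1 - b)))"
  proof -
    have "(1 - q) * (1 - x) + q = 1 - (1 - q) * x" for x
      by (simp add: algebra_simps)
    moreover have "0 < (1 - q) * (1 - a) \<longrightarrow> 0 < (1 - q) * (1 - b)"
      using q a fin by (auto simp: mult_le_0_iff)
    ultimately show ?thesis
      using log_sum_shift_le[of "(1 - q) * (1 - a)" "(1 - q) * (1 - b)" q] q a b by simp
  qed
  also have "\<dots> = (1 - q) * ((1 - a) * ln ((1 - a) / (1 - b)))"
    using q by simp
  moreover have "(1 - q) * a * ln ((1 - q) * a / ((1 - q) * b)) = (1 - q) * (a * ln (a / b))"
    using q by simp
  ultimately show ?thesis
    unfolding P Q outd_Zch_bern kl_bern by (simp only: distrib_left)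
qed

lemma eta_KL_Zch:
  assumes q: "0 < q" "q < 1"
  shows "eta_KL (Zch q) = 1 - q"
proof (rule eta_KL_eqI)
  show "kl (outd (Zch q) P) (outd (Zch q) Q) \<le> (1 - q) * kl P Q"
    if "is_dist P" "is_dist Q" "kl_finite P Q" for P Q
    using kl_outd_Zch_le q that by blast
  have kl_in: "kl (bern 1) (bern t) = ln (inverse t)" for t
    by (simp add: kl_bern inverse_eq_divide)
  show "\<forall>\<^sub>F t in at_right 0. is_dist (bern 1) \<and> is_dist (bern t) \<and> kl_finite (bern 1) (bern t)
      \<and> 0 < kl (bern 1) (bern t)"
    unfolding eventually_at_right_field kl_in
    by (intro exI[of _ 1]) (auto simp: is_dist_bern kl_finite_bern one_less_inverse)
  have kl_out: "kl (outd (Zch q) (bern 1)) (outd (Zch q) (bern t))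
      = q * ln (q / (1 - (1 - q) * t)) + (1 - q) * ln (inverse t)" for t
    unfolding outd_Zch_bern kl_bern using q by (simp add: inverse_eq_divide)
  have "((\<lambda>t. (1 - q) + q * ln (q / (1 - (1 - q) * t)) * inverse (ln (inverse t)))
      \<longlongrightarrow> (1 - q) + q * ln (q / (1 - (1 - q) * 0)) * 0) (at_right 0)"
    using q by (intro tendsto_intros tendsto_inverse_0_at_top
        filterlim_compose[OF ln_at_top filterlim_inverse_at_top_right]) auto
  moreover have "\<forall>\<^sub>F t in at_right 0.
      (1 - q) + q * ln (q / (1 - (1 - q) * t)) * inverse (ln (inverse t))
      = kl (outd (Zch q) (bern 1)) (outd (Zch q) (bern t)) / kl (bern 1) (bern t)"
    unfolding eventually_at_right_field kl_in kl_out
    by (intro exI[of _ 1]) (auto simp: field_simps)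
  ultimately show "((\<lambda>t. kl (outd (Zch q) (bern 1)) (outd (Zch q) (bern t)) / kl (bern 1) (bern t))
      \<longlongrightarrow> 1 - q) (at_right 0)"
    by (simp add: tendsto_cong)
qed simp

section \<open>The binary symmetric channel\<close>

definition logit :: "real \<Rightarrow> real" where
  "logit x = ln x - ln (1 - x)"

lemma has_real_derivative_kl_bern:
  assumes "0 < a" "a < 1" "0 < b" "b < 1"
  shows "((\<lambda>x. kl (bern x) (bern b)) has_real_derivative logit a - logit b) (at a)"
proof -
  have "\<forall>\<^sub>F x in nhds a. kl (bern x) (bern b)
      = x * (ln x - ln b) + (1 - x) * (ln (1 - x) - ln (1 - b))"
    using eventually_nhds_in_open[of "{0<..<1}" a] assms
    by (auto elim!: eventually_mono simp: kl_bern ln_div)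
  moreover have "((\<lambda>x. x * (ln x - ln b) + (1 - x) * (ln (1 - x) - ln (1 - b)))
      has_real_derivative logit a - logit b) (at a)"
    using assms unfolding logit_def
    by (auto intro!: derivative_eq_intros)
  ultimately show ?thesis
    by (subst DERIV_cong_ev) auto
qed

lemma tendsto_x_ln_x_at_right_0: "((\<lambda>x::real. x * ln x) \<longlongrightarrow> 0) (at_right 0)"
proof -
  have "((\<lambda>x::real. - (ln (inverse x) / inverse x)) \<longlongrightarrow> - 0) (at_right 0)"
    by (intro tendsto_minus filterlim_compose[OF ln_x_over_x_tendsto_0 filterlim_inverse_at_top_right])
  moreover have "\<forall>\<^sub>F x in at_right 0. - (ln (inverse x) / inverse x) = x * ln (x::real)"
    unfolding eventually_at_right_field by (auto simp: ln_inverse divide_inverse intro!: exI[of _ 1])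
  ultimately show ?thesis
    by (simp add: tendsto_cong)
qed

lemma continuous_on_x_ln_x: "continuous_on {0..} (\<lambda>x::real. x * ln x)"
  unfolding continuous_on_eq_continuous_within
proof
  fix x :: real
  assume "x \<in> {0..}"
  show "continuous (at x within {0..}) (\<lambda>x. x * ln x)"
  proof (cases "x = 0")
    case True
    then show ?thesis
      using tendsto_x_ln_x_at_right_0 by (simp add: continuous_within at_within_Ici_at_right)
  next
    case False
    then have "isCont (\<lambda>x. x * ln x) x"
      by (intro continuous_intros) auto
    then show ?thesis
      by (rule continuous_at_imp_continuous_at_within)
  qed
qed

lemma continuous_on_kl_bern:
  assumes "0 < b" "b < 1"
  shows "continuous_on {0..1} (\<lambda>a. kl (bern a) (bern b))"
proof -
  have "kl (bern a) (bern b) = a * ln a + (1 - a) * ln (1 - a) - a * ln b - (1 - a) * ln (1 - b)"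
    if "a \<in> {0..1}" for a
    using that assms by (auto simp: kl_bern ln_div algebra_simps)
  moreover have "continuous_on {0..1}
      (\<lambda>a. a * ln a + (1 - a) * ln (1 - a) - a * ln b - (1 - a) * ln (1 - b))"
  proof -
    have "continuous_on {0..1} (\<lambda>a::real. a * ln a)"
      by (rule continuous_on_subset[OF continuous_on_x_ln_x]) auto
    moreover have "continuous_on {0..1} (\<lambda>a::real. (1 - a) * ln (1 - a))"
      by (rule continuous_on_compose2[OF continuous_on_x_ln_x, of _ "\<lambda>a. 1 - a"])
        (auto intro: continuous_on_diff continuous_on_const continuous_on_id)
    ultimately show ?thesis
      by (fast intro: continuous_on_diff continuous_on_add continuous_on_mult
          continuous_on_const continuous_on_id)
  qed
  ultimately show ?thesis
    by (metis (no_types, lifting) continuous_on_cong)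
qed

lemma DERIV_sign_change_imp_min:
  fixes f f' :: "real \<Rightarrow> real"
  assumes cont: "continuous_on {lo..hi} f"
    and deriv: "\<And>x. lo < x \<Longrightarrow> x < hi \<Longrightarrow> (f has_real_derivative f' x) (at x)"
    and nonpos: "\<And>x. lo < x \<Longrightarrow> x < m \<Longrightarrow> f' x \<le> 0"
    and nonneg: "\<And>x. m < x \<Longrightarrow> x < hi \<Longrightarrow> 0 \<le> f' x"
    and m: "lo \<le> m" "m \<le> hi" and x: "lo \<le> x" "x \<le> hi"
  shows "f m \<le> f x"
proof (cases "x \<le> m")
  case True
  show ?thesis
  proof (rule DERIV_nonpos_imp_decreasing_open[OF True])
    show "\<exists>y. (f has_real_derivative y) (at z) \<and> y \<le> 0" if "x < z" "z < m" for z
      using deriv nonpos that m x by force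
    show "continuous_on {x..m} f"
      using cont by (rule continuous_on_subset) (use m x in auto)
  qed
next
  case False
  show ?thesis
  proof (rule DERIV_nonneg_imp_increasing_open[of m x f])
    show "m \<le> x"
      using False by simp
    show "\<exists>y. (f has_real_derivative y) (at z) \<and> 0 \<le> y" if "m < z" "z < x" for z
      using deriv nonneg that m x by force
    show "continuous_on {m..x} f"
      using cont by (rule continuous_on_subset) (use m x in auto)
  qed
qed

lemma crossover_mix_bounds:
  fixes p x :: real
  assumes "0 < p" "p < 1/2" "0 \<le> x" "x \<le> 1"
  shows "0 < p + (1 - 2 * p) * x" "p + (1 - 2 * p) * x < 1"
proof -
  have "0 \<le> (1 - 2 * p) * x" "(1 - 2 * p) * x \<le> 1 - 2 * p"
    using assms by (auto intro: mult_left_le)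
  then show "0 < p + (1 - 2 * p) * x" "p + (1 - 2 * p) * x < 1"
    using assms by linarith+
qed

lemma logit_gap_BSC_mono:
  fixes p :: real
  defines "c \<equiv> 1 - 2 * p"
  assumes p: "0 < p" "p < 1/2" and xy: "0 < x" "x \<le> y" "y < 1"
  shows "c * logit x - logit (p + c * x) \<le> c * logit y - logit (p + c * y)"
proof (rule DERIV_nonneg_imp_increasing_open[OF xy(2)])
  fix z :: real
  assume z: "x < z" "z < y"
  then have z01: "0 < z" "z < 1"
    using xy by auto
  define X where "X = p + c * z"
  have X: "0 < X" "X < 1"
    using crossover_mix_bounds[OF p, of z] z01 unfolding X_def c_def by auto
  have "((\<lambda>z. c * logit z - logit (p + c * z)) has_real_derivative
      c * (1 / (z * (1 - z))) - c * (1 / (X * (1 - X)))) (at z)"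
  proof -
    have "((\<lambda>z. c * logit z - logit (p + c * z)) has_real_derivative
        c * (1 / z + 1 / (1 - z)) - (c / X + c / (1 - X))) (at z)"
      unfolding logit_def X_def
      by (rule derivative_eq_intros refl | use z01 X[unfolded X_def] in simp)+
    moreover have "1 / z + 1 / (1 - z) = 1 / (z * (1 - z))"
        "c / X + c / (1 - X) = c * (1 / (X * (1 - X)))"
      using z01 X by (simp_all add: field_simps)
    ultimately show ?thesis
      by simp
  qed
  moreover have "1 / (X * (1 - X)) \<le> 1 / (z * (1 - z))"
  proof (rule divide_left_mono)
    have "X * (1 - X) - z * (1 - z) = p * (1 - p) * (1 - 2 * z)^2"
      unfolding X_def c_def by (simp add: algebra_simps power2_eq_square)
    moreover have "0 \<le> p * (1 - p) * (1 - 2 * z)^2"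
      using p by simp
    ultimately show "z * (1 - z) \<le> X * (1 - X)"
      by linarith
    show "0 < X * (1 - X) * (z * (1 - z))"
      using X z01 by simp
  qed simp
  then have "c * (1 / (X * (1 - X))) \<le> c * (1 / (z * (1 - z)))"
    using p unfolding c_def by (intro mult_left_mono) auto
  ultimately show "\<exists>d. ((\<lambda>z. c * logit z - logit (p + c * z)) has_real_derivative d) (at z) \<and> 0 \<le> d"
    by (intro exI conjI) auto
next
  show "continuous_on {x..y} (\<lambda>z. c * logit z - logit (p + c * z))"
  proof (rule continuous_at_imp_continuous_on, rule ballI)
    fix z
    assume "z \<in> {x..y}"
    then have "0 < z" "z < 1" "0 < p + c * z" "p + c * z < 1"
      using xy crossover_mix_bounds[OF p, of z] unfolding c_def by auto
    then show "isCont (\<lambda>z. c * logit z - logit (p + c * z)) z"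
      unfolding logit_def by (intro continuous_intros) auto
  qed
qed

lemma kl_bern_BSC_le:
  fixes p a b :: real
  defines "c \<equiv> 1 - 2 * p"
  assumes p: "0 < p" "p < 1/2" and a: "0 \<le> a" "a \<le> 1" and b: "0 < b" "b < 1"
  shows "kl (bern (p + c * a)) (bern (p + c * b)) \<le> c^2 * kl (bern a) (bern b)"
proof -
  define X where "X x = p + c * x" for x
  have X: "0 < X x" "X x < 1" if "0 \<le> x" "x \<le> 1" for x
    using crossover_mix_bounds[OF p that] unfolding X_def c_def by auto
  define f where "f x = c^2 * kl (bern x) (bern b) - kl (bern (X x)) (bern (X b))" for x
  define gap where "gap x = c * logit x - logit (X x)" for x
  have "f b \<le> f a"
  proof (rule DERIV_sign_change_imp_min[of 0 1 f "\<lambda>x. c * (gap x - gap b)" b a])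
    have "continuous_on {0..1} (\<lambda>x. kl (bern (X x)) (bern (X b)))"
    proof (rule continuous_on_compose2[OF continuous_on_kl_bern[OF X[of b]]])
      show "continuous_on {0..1} X"
        unfolding X_def by (intro continuous_intros)
      show "X ` {0..1} \<subseteq> {0..1}"
        using X by (force intro: less_imp_le)
    qed (use b in auto)
    then show "continuous_on {0..1} f"
      unfolding f_def using continuous_on_kl_bern[OF b]
      by (intro continuous_on_diff continuous_on_mult_left)
    show "(f has_real_derivative c * (gap x - gap b)) (at x)" if "0 < x" "x < 1" for x
    proof -
      have "(X has_real_derivative c) (at x)"
        unfolding X_def by (auto intro!: derivative_eq_intros)
      moreover have "((\<lambda>y. kl (bern y) (bern (X b))) has_real_derivative logit (X x) - logit (X b))
          (at (X x))"
        using X that b by (intro has_real_derivative_kl_bern) auto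
      ultimately have "((\<lambda>x. kl (bern (X x)) (bern (X b))) has_real_derivative
          (logit (X x) - logit (X b)) * c) (at x)"
        by (rule DERIV_chain2[rotated])
      then have "(f has_real_derivative c^2 * (logit x - logit b) - (logit (X x) - logit (X b)) * c) (at x)"
        unfolding f_def using has_real_derivative_kl_bern[of x b] that b
        by (intro DERIV_diff DERIV_cmult) auto
      moreover have "c^2 * (logit x - logit b) - (logit (X x) - logit (X b)) * c = c * (gap x - gap b)"
        unfolding gap_def by (simp add: algebra_simps power2_eq_square)
      ultimately show ?thesis
        by simp
    qed
    show "c * (gap x - gap b) \<le> 0" if "0 < x" "x < b" for x
      using logit_gap_BSC_mono[OF p, of x b] that b p
      unfolding gap_def X_def c_def by (simp add: mult_nonneg_nonpos)
    show "0 \<le> c * (gap x - gap b)" if "b < x" "x < 1" for x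
      using logit_gap_BSC_mono[OF p, of b x] that b p
      unfolding gap_def X_def c_def by simp
  qed (use a b in auto)
  moreover have "f b = 0"
    unfolding f_def by (simp add: kl_bern)
  ultimately show ?thesis
    unfolding f_def X_def by simp
qed

lemma kl_outd_BSC_le:
  assumes p: "0 < p" "p < 1/2"
    and "is_dist P" "is_dist Q" "kl_finite P Q" "0 < kl P Q"
  shows "kl (outd (BSC p) P) (outd (BSC p) Q) \<le> (1 - 2 * p)^2 * kl P Q"
proof -
  obtain a b where P: "P = bern a" and Q: "Q = bern b"
    using is_dist_eq_bern assms by blast
  have a: "0 \<le> a" "a \<le> 1" and fin: "0 < a \<longrightarrow> 0 < b" "a < 1 \<longrightarrow> b < 1"
    using assms unfolding P Q is_dist_bern kl_finite_bern by auto
  have "b \<noteq> 0" "b \<noteq> 1"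
    using fin a \<open>0 < kl P Q\<close> unfolding P Q kl_bern by auto
  then have "0 < b" "b < 1"
    using assms unfolding Q is_dist_bern by auto
  then show ?thesis
    unfolding P Q outd_BSC_bern using kl_bern_BSC_le[OF p a] by simp
qed

lemma kl_bern_half:
  "kl (bern ((1 + v) / 2)) (bern (1 / 2)) = ((1 + v) * ln (1 + v) + (1 - v) * ln (1 - v)) / 2"
proof -
  have "(1 + v) / 2 / (1 / 2) = 1 + v" "(1 - v) / 2 / (1 - 1 / 2) = 1 - v"
    by simp_all
  moreover have "1 - (1 + v) / 2 = (1 - v) / 2"
    by (simp add: field_simps)
  ultimately show ?thesis
    unfolding kl_bern by (simp only:) (simp add: field_simps)
qed

lemma lhopital_right_0_scaled:
  fixes f f' :: "real \<Rightarrow> real"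
  assumes c: "0 < c" "c \<le> 1"
    and f0: "(f \<longlongrightarrow> 0) (at_right 0)"
    and deriv: "\<And>u. 0 < u \<Longrightarrow> u < 1 \<Longrightarrow> (f has_real_derivative f' u) (at u)"
    and nonzero: "\<And>u. 0 < u \<Longrightarrow> u < 1 \<Longrightarrow> f u \<noteq> 0 \<and> f' u \<noteq> 0"
    and lim: "((\<lambda>u. f' (c * u) / f' u) \<longlongrightarrow> l) (at_right 0)"
  shows "((\<lambda>u. f (c * u) / f u) \<longlongrightarrow> c * l) (at_right 0)"
proof (rule lhopital_right_0[where f' = "\<lambda>u. f' (c * u) * c" and g' = f'])
  have unit: "\<forall>\<^sub>F u in at_right 0. 0 < u \<and> u < (1::real)"
    unfolding eventually_at_right_field by (intro exI[of _ 1]) auto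
  have cu: "0 < c * u" "c * u < 1" if "0 < u" "u < 1" for u
  proof -
    have "c * u \<le> 1 * u"
      using c that by (intro mult_right_mono) auto
    then show "c * u < 1"
      using that by linarith
    show "0 < c * u"
      using c that by simp
  qed
  have "filterlim (\<lambda>u. c * u) (at_right 0) (at_right 0)"
    unfolding filterlim_at
  proof
    show "\<forall>\<^sub>F u in at_right 0. c * u \<in> {0<..} \<and> c * u \<noteq> 0"
      using unit by eventually_elim (use cu in auto)
    show "((\<lambda>u. c * u) \<longlongrightarrow> 0) (at_right 0)"
      by (intro tendsto_mult_right_zero tendsto_ident_at)
  qed
  then show "((\<lambda>u. f (c * u)) \<longlongrightarrow> 0) (at_right 0)"
    by (rule filterlim_compose[OF f0])
  show "(f \<longlongrightarrow> 0) (at_right 0)"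
    by (rule f0)
  show "\<forall>\<^sub>F u in at_right 0. f u \<noteq> 0"
    using unit by eventually_elim (use nonzero in blast)
  show "\<forall>\<^sub>F u in at_right 0. f' u \<noteq> 0"
    using unit by eventually_elim (use nonzero in blast)
  show "\<forall>\<^sub>F u in at_right 0. ((\<lambda>u. f (c * u)) has_real_derivative f' (c * u) * c) (at u)"
    using unit
  proof eventually_elim
    case (elim u)
    show ?case
      using cu[OF elim[THEN conjunct1] elim[THEN conjunct2]]
      by (intro DERIV_chain2[OF deriv]) (auto intro!: derivative_eq_intros)
  qed
  show "\<forall>\<^sub>F u in at_right 0. (f has_real_derivative f' u) (at u)"
    using unit by eventually_elim (use deriv in auto)
  show "((\<lambda>u. f' (c * u) * c / f' u) \<longlongrightarrow> c * l) (at_right 0)"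
    using tendsto_mult_left[OF lim, of c] by (simp add: field_simps)
qed

lemma tendsto_kl_bern_half_ratio:
  fixes c :: real
  assumes c: "0 < c" "c \<le> 1"
  shows "((\<lambda>u. kl (bern ((1 + c * u) / 2)) (bern (1 / 2)) / kl (bern ((1 + u) / 2)) (bern (1 / 2)))
      \<longlongrightarrow> c^2) (at_right 0)"
proof -
  define G where "G v = (1 + v) * ln (1 + v) + (1 - v) * ln (1 - v)" for v :: real
  define L where "L v = ln (1 + v) - ln (1 - v)" for v :: real
  define M where "M v = 1 / (1 + v) + 1 / (1 - v)" for v :: real
  have L_ratio: "((\<lambda>u. L (c * u) / L u) \<longlongrightarrow> c * 1) (at_right 0)"
  proof (rule lhopital_right_0_scaled[OF c])
    have "(L \<longlongrightarrow> L 0) (at_right 0)"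
      unfolding L_def by (intro tendsto_intros) auto
    then show "(L \<longlongrightarrow> 0) (at_right 0)"
      by (simp add: L_def)
    show "(L has_real_derivative M u) (at u)" if "0 < u" "u < 1" for u
      unfolding L_def M_def using that by (auto intro!: derivative_eq_intros)
    show "L u \<noteq> 0 \<and> M u \<noteq> 0" if "0 < u" "u < 1" for u
      unfolding L_def M_def using that add_pos_pos[of "1 / (1 + u)" "1 / (1 - u)"] by auto
    have "((\<lambda>u. M (c * u) / M u) \<longlongrightarrow> M (c * 0) / M 0) (at_right 0)"
      unfolding M_def by (intro tendsto_intros) auto
    then show "((\<lambda>u. M (c * u) / M u) \<longlongrightarrow> 1) (at_right 0)"
      by (simp add: M_def)
  qed
  have "((\<lambda>u. G (c * u) / G u) \<longlongrightarrow> c * (c * 1)) (at_right 0)"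
  proof (rule lhopital_right_0_scaled[OF c _ _ _ L_ratio])
    have "(G \<longlongrightarrow> G 0) (at_right 0)"
      unfolding G_def by (intro tendsto_intros) auto
    then show "(G \<longlongrightarrow> 0) (at_right 0)"
      by (simp add: G_def)
    show "(G has_real_derivative L u) (at u)" if "0 < u" "u < 1" for u
      unfolding G_def L_def using that by (auto intro!: derivative_eq_intros)
    show "G u \<noteq> 0 \<and> L u \<noteq> 0" if "0 < u" "u < 1" for u
      using kl_bern_pos[of "(1 + u) / 2" "1 / 2"] kl_bern_half[of u] that
      unfolding G_def L_def by simp
  qed
  moreover have "G v / 2 / (G w / 2) = G v / G w" for v w
    by simp
  ultimately show ?thesis
    by (simp add: kl_bern_half G_def power2_eq_square)
qed

lemma eta_KL_BSC:
  assumes p: "0 < p" "p < 1/2"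
  shows "eta_KL (BSC p) = (1 - 2 * p)^2"
proof (rule eta_KL_eqI)
  define c where "c = 1 - 2 * p"
  have c: "0 < c" "c \<le> 1"
    using p unfolding c_def by auto
  show "kl (outd (BSC p) P) (outd (BSC p) Q) \<le> (1 - 2 * p)^2 * kl P Q"
    if "is_dist P" "is_dist Q" "kl_finite P Q" "0 < kl P Q" for P Q
    using kl_outd_BSC_le p that by blast
  show "\<forall>\<^sub>F u in at_right 0. is_dist (bern ((1 + u) / 2)) \<and> is_dist (bern (1 / 2))
      \<and> kl_finite (bern ((1 + u) / 2)) (bern (1 / 2)) \<and> 0 < kl (bern ((1 + u) / 2)) (bern (1 / 2))"
    unfolding eventually_at_right_field
    by (intro exI[of _ 1]) (auto simp: is_dist_bern kl_finite_bern intro!: kl_bern_pos)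
  have mix: "p + c * ((1 + u) / 2) = (1 + c * u) / 2" "p + c * (1 / 2) = 1 / 2" for u
    unfolding c_def by (simp_all add: field_simps)
  show "((\<lambda>u. kl (outd (BSC p) (bern ((1 + u) / 2))) (outd (BSC p) (bern (1 / 2)))
      / kl (bern ((1 + u) / 2)) (bern (1 / 2))) \<longlongrightarrow> (1 - 2 * p)^2) (at_right 0)"
    unfolding outd_BSC_bern c_def[symmetric] mix using tendsto_kl_bern_half_ratio[OF c] .
qed simp

section \<open>Less noisy and the divergence between rows\<close>

definition test_input :: "real \<Rightarrow> nat \<Rightarrow> bool \<Rightarrow> real" where
  "test_input e u x = (if u = 0 \<and> x then 1 - e else if u = 1 \<and> \<not> x then e else 0)"

definition test_info :: "bchannel \<Rightarrow> real \<Rightarrow> real" where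
  "test_info K e = (\<Sum>y\<in>UNIV.
      (1 - e) * K True y * (ln (K True y) - ln ((1 - e) * K True y + e * K False y))
      + e * K False y * (ln (K False y) - ln ((1 - e) * K True y + e * K False y)))"

lemma is_joint_UX_test_input: "0 \<le> e \<Longrightarrow> e \<le> 1 \<Longrightarrow> is_joint_UX 2 (test_input e)"
  unfolding is_joint_UX_def test_input_def sum_UNIV_bool by (simp add: numeral_2_eq_2)

lemma mutual_info_summand_eq:
  fixes w k n :: real
  assumes "0 < w" "0 \<le> k" "0 < k \<longrightarrow> 0 < n"
  shows "(if w * k = 0 then 0 else w * k * ln (w * k / (w * n))) = w * k * (ln k - ln n)"
  using assms by (auto simp: ln_div)

lemma mutual_info_test_input:
  assumes K: "\<And>x. is_dist (K x)" and e: "0 < e" "e < 1"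
  shows "mutual_info {..<2} UNIV (joint_UY K (test_input e)) = test_info K e"
proof -
  let ?J = "joint_UY K (test_input e)"
  have nonneg: "0 \<le> K x y" and rows: "K x False + K x True = 1" for x y
    using K unfolding is_dist_def sum_UNIV_bool by auto
  have J0: "?J 0 y = (1 - e) * K True y" and J1: "?J 1 y = e * K False y" for y
    unfolding joint_UY_def test_input_def sum_UNIV_bool by auto
  have row0: "?J 0 False + ?J 0 True = 1 - e" and row1: "?J 1 False + ?J 1 True = e"
    unfolding J0 J1 using rows by (simp_all add: distrib_left[symmetric])
  have sum01: "(\<Sum>u\<in>{0, 1}. f u) = f 0 + f 1" for f :: "nat \<Rightarrow> real"
    by simp
  have two: "{..<2::nat} = {0, 1}"
    by auto
  have mix_pos: "0 < K x y \<longrightarrow> 0 < (1 - e) * K True y + e * K False y" for x y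
    using e nonneg[of True y] nonneg[of False y]
    by (cases x) (auto intro: add_pos_nonneg add_nonneg_pos)
  have "(if (1 - e) * K True y = 0 then 0 else (1 - e) * K True y
      * ln ((1 - e) * K True y / ((1 - e) * ((1 - e) * K True y + e * K False y))))
    = (1 - e) * K True y * (ln (K True y) - ln ((1 - e) * K True y + e * K False y))" for y
    by (rule mutual_info_summand_eq) (use e nonneg mix_pos in auto)
  moreover have "(if e * K False y = 0 then 0 else e * K False y
      * ln (e * K False y / (e * ((1 - e) * K True y + e * K False y))))
    = e * K False y * (ln (K False y) - ln ((1 - e) * K True y + e * K False y))" for y
    by (rule mutual_info_summand_eq) (use e nonneg mix_pos in auto)
  ultimately show ?thesis
    unfolding mutual_info_def test_info_def two sum01 sum_UNIV_bool row0 row1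
    unfolding J0 J1
    by (simp only: add_ac)
qed

lemma has_real_derivative_mix_info:
  fixes a b :: real
  assumes "0 < a"
  shows "((\<lambda>e. (1 - e) * a * (ln a - ln ((1 - e) * a + e * b))
      + e * b * (ln b - ln ((1 - e) * a + e * b))) has_real_derivative (a - b) + b * (ln b - ln a)) (at 0)"
  using assms by (auto intro!: derivative_eq_intros simp: field_simps)

lemma has_real_derivative_test_info:
  assumes K: "\<And>x. is_dist (K x)" and pos: "\<And>y. 0 < K True y"
  shows "(test_info K has_real_derivative kl (K False) (K True)) (at 0)"
proof -
  have "(test_info K has_real_derivative
      (\<Sum>y\<in>UNIV. (K True y - K False y) + K False y * (ln (K False y) - ln (K True y)))) (at 0)"
    unfolding test_info_def[abs_def] using pos
    by (intro DERIV_sum has_real_derivative_mix_info)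
  moreover have "(\<Sum>y\<in>UNIV. K True y - K False y) = 0"
    using K[of True] K[of False] unfolding is_dist_def sum_UNIV_bool by simp
  moreover have "kl (K False) (K True) = (\<Sum>y\<in>UNIV. K False y * (ln (K False y) - ln (K True y)))"
    unfolding kl_def using pos by (intro sum.cong refl) (simp add: ln_div less_imp_neq[symmetric])
  ultimately show ?thesis
    by (simp add: sum.distrib)
qed

lemma test_info_0: "test_info K 0 = 0"
  unfolding test_info_def by simp

lemma less_noisy_imp_kl_rows_le:
  assumes "less_noisy K L"
    and K: "\<And>x. is_dist (K x)" "\<And>y. 0 < K True y"
    and L: "\<And>x. is_dist (L x)" "\<And>y. 0 < L True y"
  shows "kl (L False) (L True) \<le> kl (K False) (K True)"
proof (rule ccontr)
  assume "\<not> ?thesis"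
  then have "0 < kl (L False) (L True) - kl (K False) (K True)"
    by simp
  moreover have "((\<lambda>e. test_info L e - test_info K e) has_real_derivative
      kl (L False) (L True) - kl (K False) (K True)) (at 0)"
    using has_real_derivative_test_info[of L] has_real_derivative_test_info[of K] K L
    by (intro DERIV_diff) auto
  ultimately obtain d where "0 < d"
    and inc: "\<And>h. 0 < h \<Longrightarrow> h < d \<Longrightarrow> test_info L 0 - test_info K 0 < test_info L (0 + h) - test_info K (0 + h)"
    using DERIV_pos_inc_right by blast
  define h where "h = min (d / 2) (1 / 2)"
  have h: "0 < h" "h < d" "h < 1"
    using \<open>0 < d\<close> unfolding h_def by auto
  have "test_info K h < test_info L h"
    using inc[OF h(1,2)] by (simp add: test_info_0)
  moreover have "mutual_info {..<2} UNIV (joint_UY L (test_input h))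
      \<le> mutual_info {..<2} UNIV (joint_UY K (test_input h))"
    using \<open>less_noisy K L\<close> is_joint_UX_test_input[of h] h unfolding less_noisy_def by simp
  ultimately show False
    using mutual_info_test_input[OF K(1)] mutual_info_test_input[OF L(1)] h by simp
qed

lemma Zch_rows: "Zch q False = bern 0" "Zch q True = bern (1 - q)"
  by (auto simp: Zch_def bern_def)

lemma BSC_rows: "BSC p False = bern p" "BSC p True = bern (1 - p)"
  by (auto simp: BSC_def bern_def)

lemma is_dist_Zch_row: "0 \<le> q \<Longrightarrow> q \<le> 1 \<Longrightarrow> is_dist (Zch q x)"
  by (cases x) (simp_all add: Zch_rows is_dist_bern)

lemma is_dist_BSC_row: "0 \<le> p \<Longrightarrow> p \<le> 1 \<Longrightarrow> is_dist (BSC p x)"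
  by (cases x) (simp_all add: BSC_rows is_dist_bern)

lemma kl_rows_Zch_lt_BSC:
  assumes p: "0 < p" "p < 1/2"
  shows "kl (Zch (4 * p * (1 - p)) False) (Zch (4 * p * (1 - p)) True) < kl (BSC p False) (BSC p True)"
proof -
  have ln4: "ln (4::real) = 2 * ln 2"
    using ln_realpow[of 2 2] by simp
  have "kl (Zch (4 * p * (1 - p)) False) (Zch (4 * p * (1 - p)) True) = - 2 * ln 2 - ln p - ln (1 - p)"
    unfolding Zch_rows kl_bern using p by (simp add: ln_div ln_mult ln4)
  moreover have "kl (BSC p False) (BSC p True) = p * (ln p - ln (1 - p)) + (1 - p) * (ln (1 - p) - ln p)"
    unfolding BSC_rows kl_bern using p by (simp add: ln_div)
  moreover have "kl (bern p) (bern (1 / 2)) = p * (ln 2 + ln p) + (1 - p) * (ln 2 + ln (1 - p))"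
  proof -
    have "p / (1 / 2) = 2 * p" "(1 - p) / (1 - 1 / 2) = 2 * (1 - p)"
      by simp_all
    moreover have "ln (2 * p) = ln 2 + ln p"
      using p by (intro ln_mult_pos) auto
    moreover have "ln (2 * (1 - p)) = ln 2 + ln (1 - p)"
      using p by (intro ln_mult_pos) auto
    ultimately show ?thesis
      unfolding kl_bern by (simp only:)
  qed
  moreover have "0 < kl (bern p) (bern (1 / 2))"
    using p by (intro kl_bern_pos) auto
  ultimately show ?thesis
    by (simp add: algebra_simps)
qed

theorem mainTheorem9:
  fixes p q :: real
  assumes "0 < p" and "p < 1/2" and "q = 4 * p * (1 - p)"
  shows "eta_KL (Zch q) = (1 - 2*p)^2 \<and> eta_KL (BSC p) = (1 - 2*p)^2
         \<and> \<not> less_noisy (Zch q) (BSC p)"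
proof -
  have p: "0 < p" "p < 1/2"
    using assms by auto
  have q: "1 - q = (1 - 2 * p)^2"
    using assms by (simp add: power2_eq_square algebra_simps)
  moreover have "0 < (1 - 2 * p)^2"
    using p by simp
  ultimately have "q < 1"
    by linarith
  have "0 < q"
    using p assms(3) by simp
  have "\<not> less_noisy (Zch q) (BSC p)"
  proof
    assume "less_noisy (Zch q) (BSC p)"
    then have "kl (BSC p False) (BSC p True) \<le> kl (Zch q False) (Zch q True)"
      using \<open>0 < q\<close> \<open>q < 1\<close> p
      by (intro less_noisy_imp_kl_rows_le is_dist_Zch_row is_dist_BSC_row)
        (auto simp: Zch_rows BSC_rows bern_def)
    then show False
      using kl_rows_Zch_lt_BSC[OF p] assms(3) by simp
  qed
  then show ?thesis
    using eta_KL_Zch[OF \<open>0 < q\<close> \<open>q < 1\<close>] eta_KL_BSC[OF p] q by simp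
qed

end
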